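(* Let $\mathcal G=(\mathcal V,\mathcal E)$ be an undirected simple graph, $k\ge1$, $d\ge2$, and let $v,w\in\mathcal V$ satisfy $\mathrm{dist}(v,w)=k$. Suppose the radius-$k$ neighborhood of $v$ is a $d$-regular tree, i.e. the subgraph induced on the vertices at distance at most $k$ from $v$ is a tree and every such vertex has degree $d$ in $\mathcal G$. Let $I^A_{v,k}(w)$ (resp. $I^B_{v,k}(w)$) denote the influence of $w$ on the $k$-th sequence element at $v$ for the adjacency extraction $\mathbf S^{(k)}=\tilde{\mathbf A}_{\mathcal G}^k\mathbf X$ (resp. the non-backtracking extraction $\mathbf S^{(k)}=\mathbf B_{\mathcal G}^{(k)}\mathbf X$). Then $$\frac{I^A_{v,k}(w)}{I^B_{v,k}(w)}=\left(\frac{d-1}{d}\right)^{k-1}.$$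
   Context: $\mathbf X\in\mathbb R^{n\times d'}$ are node features with rows $\mathbf x_u$; $\mathbf s_v^{(k)}$ is row $v$ of $\mathbf S^{(k)}$. $\mathbf A_{\mathcal G}$ is the adjacency matrix, $\mathbf D_{\mathcal G}$ the diagonal degree matrix, $\tilde{\mathbf A}_{\mathcal G}=\mathbf D_{\mathcal G}^{-1/2}\mathbf A_{\mathcal G}\mathbf D_{\mathcal G}^{-1/2}$. Non-backtracking matrices: $\mathbf B_{\mathcal G}^{(0)}=\mathbf I$, $\mathbf B_{\mathcal G}^{(1)}=\mathbf A_{\mathcal G}$, $\mathbf B_{\mathcal G}^{(2)}=\mathbf A_{\mathcal G}^2-\mathbf D_{\mathcal G}$, $\mathbf B_{\mathcal G}^{(t+2)}=\mathbf A_{\mathcal G}\mathbf B_{\mathcal G}^{(t+1)}-(\mathbf D_{\mathcal G}-\mathbf I)\mathbf B_{\mathcal G}^{(t)}$. Influence: $I_{v,k}(w)=\mathbf e^T\big[\partial\mathbf s_v^{(k)}/\partial\mathbf x_w\big]\mathbf e\,\big/\,\sum_{u\in\mathcal V}\mathbf e^T\big[\partial\mathbf s_v^{(k)}/\partial\mathbf x_u\big]\mathbf e$, with $\mathbf e$ the all-ones vector. *)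

theory Defs
  imports "HOL-Analysis.Analysis" "HOL-Library.Extended_Nat"
begin

(* Matrices indexed by V are functions
   'a \<Rightarrow> 'a \<Rightarrow> real (only entries on V \<times> V matter). *)

definition walk :: "('a \<Rightarrow> 'a \<Rightarrow> bool) \<Rightarrow> 'a set \<Rightarrow> 'a list \<Rightarrow> bool" where
  "walk E S xs \<longleftrightarrow> xs \<noteq> [] \<and> set xs \<subseteq> S \<and>
     (\<forall>i. Suc i < length xs \<longrightarrow> E (xs ! i) (xs ! Suc i))"

definition gdist :: "'a set \<Rightarrow> ('a \<Rightarrow> 'a \<Rightarrow> bool) \<Rightarrow> 'a \<Rightarrow> 'a \<Rightarrow> enat" where
  "gdist V E a b = (INF xs \<in> {xs. walk E V xs \<and> hd xs = a \<and> last xs = b}.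
                      enat (length xs - 1))"

definition ball :: "'a set \<Rightarrow> ('a \<Rightarrow> 'a \<Rightarrow> bool) \<Rightarrow> 'a \<Rightarrow> nat \<Rightarrow> 'a set" where
  "ball V E v k = {u \<in> V. gdist V E v u \<le> enat k}"

definition is_tree :: "('a \<Rightarrow> 'a \<Rightarrow> bool) \<Rightarrow> 'a set \<Rightarrow> bool" where
  "is_tree E S \<longleftrightarrow> S \<noteq> {} \<and>
     (\<forall>a\<in>S. \<forall>b\<in>S. \<exists>xs. walk E S xs \<and> hd xs = a \<and> last xs = b) \<and>
     \<not> (\<exists>cs. 3 \<le> length cs \<and> distinct cs \<and> walk E S cs \<and> E (last cs) (hd cs))"

definition deg :: "'a set \<Rightarrow> ('a \<Rightarrow> 'a \<Rightarrow> bool) \<Rightarrow> 'a \<Rightarrow> nat" where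
  "deg V E u = card {x \<in> V. E u x}"

definition idm :: "'a \<Rightarrow> 'a \<Rightarrow> real" where
  "idm i j = (if i = j then 1 else 0)"

definition mmul :: "'a set \<Rightarrow> ('a \<Rightarrow> 'a \<Rightarrow> real) \<Rightarrow> ('a \<Rightarrow> 'a \<Rightarrow> real) \<Rightarrow> 'a \<Rightarrow> 'a \<Rightarrow> real" where
  "mmul V M N = (\<lambda>i j. \<Sum>l\<in>V. M i l * N l j)"

fun mpow :: "'a set \<Rightarrow> ('a \<Rightarrow> 'a \<Rightarrow> real) \<Rightarrow> nat \<Rightarrow> 'a \<Rightarrow> 'a \<Rightarrow> real" where
  "mpow V M 0 = idm"
| "mpow V M (Suc n) = mmul V M (mpow V M n)"

definition adj :: "('a \<Rightarrow> 'a \<Rightarrow> bool) \<Rightarrow> 'a \<Rightarrow> 'a \<Rightarrow> real" where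
  "adj E i j = (if E i j then 1 else 0)"

definition degm :: "'a set \<Rightarrow> ('a \<Rightarrow> 'a \<Rightarrow> bool) \<Rightarrow> 'a \<Rightarrow> 'a \<Rightarrow> real" where
  "degm V E i j = (if i = j then real (deg V E i) else 0)"

(* D^{-1/2} A D^{-1/2}; convention 1/sqrt 0 = 0 for isolated vertices *)
definition normadj :: "'a set \<Rightarrow> ('a \<Rightarrow> 'a \<Rightarrow> bool) \<Rightarrow> 'a \<Rightarrow> 'a \<Rightarrow> real" where
  "normadj V E i j = adj E i j / (sqrt (real (deg V E i)) * sqrt (real (deg V E j)))"

fun nbm :: "'a set \<Rightarrow> ('a \<Rightarrow> 'a \<Rightarrow> bool) \<Rightarrow> nat \<Rightarrow> 'a \<Rightarrow> 'a \<Rightarrow> real" where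
  "nbm V E 0 = idm"
| "nbm V E (Suc 0) = adj E"
| "nbm V E (Suc (Suc 0)) = (\<lambda>i j. mmul V (adj E) (adj E) i j - degm V E i j)"
| "nbm V E (Suc (Suc (Suc t))) =
     (\<lambda>i j. mmul V (adj E) (nbm V E (Suc (Suc t))) i j
           - mmul V (\<lambda>a b. degm V E a b - idm a b) (nbm V E (Suc t)) i j)"

(* row v of S = M X, with X the node-feature matrix (rows x_u \<in> R^d') *)
definition srow :: "'a set \<Rightarrow> ('a \<Rightarrow> 'a \<Rightarrow> real) \<Rightarrow> ('a \<Rightarrow> real^'f) \<Rightarrow> 'a \<Rightarrow> real^'f" where
  "srow V M X v = (\<Sum>u\<in>V. M v u *\<^sub>R X u)"

definition jac :: "'a set \<Rightarrow> ('a \<Rightarrow> 'a \<Rightarrow> real) \<Rightarrow> ('a \<Rightarrow> real^'f) \<Rightarrow> 'a \<Rightarrow> 'a \<Rightarrow> real^'f^'f" where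
  "jac V M X v u = matrix (THE f'. ((\<lambda>y. srow V M (X(u := y)) v) has_derivative f') (at (X u)))"

definition esum :: "real^'f^'f \<Rightarrow> real" where
  "esum J = (\<Sum>i\<in>UNIV. \<Sum>j\<in>UNIV. J $ i $ j)"

definition influence :: "'a set \<Rightarrow> ('a \<Rightarrow> 'a \<Rightarrow> real) \<Rightarrow> ('a \<Rightarrow> real^'f) \<Rightarrow> 'a \<Rightarrow> 'a \<Rightarrow> real" where
  "influence V M X v w = esum (jac V M X v w) / (\<Sum>u\<in>V. esum (jac V M X v u))"

end

(* Both extractions are linear in the features, so the influence of w on v is the (v, w) entry
   of the extraction matrix divided by the sum of row v.  Call the distance from v the level.  In
   the tree ball no edge joins two vertices of the same level and every vertex of level t + 1 has
   exactly one neighbour of level t: otherwise the ancestor paths of two vertices of equal level,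
   joined through deeper vertices, would close a cycle.  Hence row v of the non-backtracking matrix
   B^(t) is the indicator of the sphere of radius t, which has d (d - 1)^(t - 1) vertices, while row
   v of the t-th power of the normalised adjacency matrix is a probability vector that gives each
   vertex of level t the weight d^(-t) of its unique geodesic.  The ratio of the influences is
   d^(-k) d (d - 1)^(k - 1). *)

theory Submission
  imports Defs
begin

lemma esum_matrix_scaleR: "esum (matrix (\<lambda>y::real^'f. c *\<^sub>R y)) = c * CARD('f)"
  unfolding esum_def matrix_def by (simp add: axis_def if_distrib[of "\<lambda>b. c * b"] cong: if_cong)

lemma jac_linear_extraction:
  assumes "finite V" "u \<in> V"
  shows "jac V M X v u = matrix (\<lambda>y::real^'f. M v u *\<^sub>R y)"
proof -
  have "srow V M (X(u := y)) v = M v u *\<^sub>R y + (\<Sum>u'\<in>V - {u}. M v u' *\<^sub>R X u')" for y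
    unfolding srow_def using assms by (simp add: sum.remove)
  then have "((\<lambda>y. srow V M (X(u := y)) v) has_derivative (\<lambda>y. M v u *\<^sub>R y)) (at (X u))"
    by (auto intro!: derivative_eq_intros)
  then have "(THE f'. ((\<lambda>y. srow V M (X(u := y)) v) has_derivative f') (at (X u))) = (\<lambda>y. M v u *\<^sub>R y)"
    using has_derivative_unique by blast
  then show ?thesis
    unfolding jac_def by simp
qed

lemma influence_linear_extraction:
  assumes "finite V" "w \<in> V"
  shows "influence V M (X :: 'a \<Rightarrow> real^'f) v w = M v w / (\<Sum>u\<in>V. M v u)"
  using assms
  by (simp add: influence_def jac_linear_extraction esum_matrix_scaleR sum_distrib_right[symmetric])

lemma mmul_assoc: "finite V \<Longrightarrow> mmul V (mmul V M N) P = mmul V M (mmul V N P)"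
  unfolding mmul_def
  by (auto simp: fun_eq_iff sum_distrib_left sum_distrib_right mult.assoc intro: sum.swap)

lemma mmul_diff_left: "mmul V (M - N) P = mmul V M P - mmul V N P"
  unfolding mmul_def by (simp add: fun_eq_iff left_diff_distrib sum_subtractf)

lemma mmul_diff_right: "mmul V M (N - P) = mmul V M N - mmul V M P"
  unfolding mmul_def by (simp add: fun_eq_iff right_diff_distrib sum_subtractf)

lemma mmul_idm_left:
  assumes "finite V" "\<And>i j. i \<notin> V \<Longrightarrow> M i j = 0"
  shows "mmul V idm M = M"
proof -
  have "(\<Sum>l\<in>V. idm i l * M l j) = M i j" for i j
    using assms by (simp add: idm_def if_distrib[of "\<lambda>x. x * _"] cong: if_cong)
  then show ?thesis
    unfolding mmul_def by blast
qed

lemma mmul_idm_right: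
  assumes "finite V" "\<And>i j. j \<notin> V \<Longrightarrow> M i j = 0"
  shows "mmul V M idm = M"
proof -
  have "(\<Sum>l\<in>V. M i l * idm l j) = M i j" for i j
    using assms by (simp add: idm_def if_distrib[of "\<lambda>x. _ * x"] cong: if_cong)
  then show ?thesis
    unfolding mmul_def by blast
qed

lemma mpow_Suc_right:
  assumes "finite V" "\<And>i j. i \<notin> V \<or> j \<notin> V \<Longrightarrow> M i j = 0"
  shows "mpow V M (Suc n) = mmul V (mpow V M n) M"
proof (induction n)
  case 0
  show ?case
    using assms by (simp add: mmul_idm_left mmul_idm_right)
next
  case (Suc n)
  then show ?case
    using assms(1) by (simp add: mmul_assoc[symmetric])
qed

lemma right_recurrence_from_left:
  fixes B :: "nat \<Rightarrow> 'a \<Rightarrow> 'a \<Rightarrow> real"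
  assumes fin: "finite V"
    and left: "\<And>n. B (n + 3) = mmul V A (B (n + 2)) - mmul V Q (B (n + 1))"
    and base3: "B 3 = mmul V (B 2) A - mmul V (B 1) Q"
    and base4: "B 4 = mmul V (B 3) A - mmul V (B 2) Q"
  shows "B (n + 3) = mmul V (B (n + 2)) A - mmul V (B (n + 1)) Q"
proof -
  have "B (n + 3) = mmul V (B (n + 2)) A - mmul V (B (n + 1)) Q \<and>
        B (n + 4) = mmul V (B (n + 3)) A - mmul V (B (n + 2)) Q"
  proof (induction n)
    case 0
    show ?case
      unfolding add_0 using base3 base4 ..
  next
    case (Suc n)
    then have IH: "B (n + 3) = mmul V (B (n + 2)) A - mmul V (B (n + 1)) Q"
      "B (n + 4) = mmul V (B (n + 3)) A - mmul V (B (n + 2)) Q" by blast+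
    have "B (n + 5) = mmul V A (B (n + 4)) - mmul V Q (B (n + 3))"
      using left[of "n + 2"] by (simp add: eval_nat_numeral)
    also have "\<dots> = mmul V A (mmul V (B (n + 3)) A - mmul V (B (n + 2)) Q)
                   - mmul V Q (mmul V (B (n + 2)) A - mmul V (B (n + 1)) Q)"
      by (simp only: IH)
    also have "\<dots> = mmul V (mmul V A (B (n + 3)) - mmul V Q (B (n + 2))) A
                   - mmul V (mmul V A (B (n + 2)) - mmul V Q (B (n + 1))) Q"
      by (simp add: mmul_diff_left mmul_diff_right mmul_assoc[OF fin] fun_eq_iff)
    also have "\<dots> = mmul V (B (n + 4)) A - mmul V (B (n + 3)) Q"
      using left[of n] left[of "n + 1"] by (simp add: eval_nat_numeral)
    finally show ?case
      using IH(2) by (simp add: eval_nat_numeral del: minus_apply)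
  qed
  then show ?thesis ..
qed

lemma walk_iff_successively: "walk E S xs \<longleftrightarrow> xs \<noteq> [] \<and> set xs \<subseteq> S \<and> successively E xs"
  unfolding walk_def successively_conv_nth by blast

lemma successively_map_upt:
  "(\<And>i. Suc i < n \<Longrightarrow> P (f i) (f (Suc i))) \<Longrightarrow> successively P (map f [0..<n])"
  by (simp add: successively_conv_nth)

lemma gdist_le_walk:
  assumes "walk E V xs" "hd xs = a" "last xs = b"
  shows "gdist V E a b \<le> enat (length xs - 1)"
  unfolding gdist_def by (rule INF_lower) (use assms in simp)

lemma gdist_attained:
  assumes "gdist V E a b = enat n"
  obtains xs where "walk E V xs" "hd xs = a" "last xs = b" "length xs = Suc n"
proof -
  let ?W = "{xs. walk E V xs \<and> hd xs = a \<and> last xs = b}"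
  have "?W \<noteq> {}"
  proof
    assume "?W = {}"
    then have "gdist V E a b = \<infinity>"
      unfolding gdist_def by (simp only: image_empty Inf_empty) (simp add: top_enat_def)
    with assms show False
      by simp
  qed
  then have "gdist V E a b \<in> (\<lambda>xs. enat (length xs - 1)) ` ?W"
    unfolding gdist_def by (blast intro: wellorder_InfI)
  then obtain xs where "xs \<in> ?W" "n = length xs - 1"
    using assms by auto
  moreover have "xs \<noteq> []"
    using \<open>xs \<in> ?W\<close> by (simp add: walk_def)
  ultimately show ?thesis
    using that by auto
qed

lemma gdist_self: "a \<in> V \<Longrightarrow> gdist V E a a = 0"
  using gdist_le_walk[of E V "[a]" a a] by (simp add: walk_def zero_enat_def[symmetric])

lemma gdist_eq_0_imp_eq:
  assumes "gdist V E a b = 0"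
  shows "a = b"
proof -
  obtain xs where "hd xs = a" "last xs = b" "length xs = Suc 0"
    using assms gdist_attained[of V E a b 0] by (auto simp: zero_enat_def)
  then show ?thesis
    by (auto simp: length_Suc_conv)
qed

lemma gdist_finite_imp_in_V:
  assumes "gdist V E a b = enat n"
  shows "b \<in> V"
proof -
  obtain xs where "walk E V xs" "last xs = b"
    using assms by (rule gdist_attained)
  then show ?thesis
    by (auto simp: walk_def)
qed

locale simple_graph =
  fixes V :: "'a set" and E :: "'a \<Rightarrow> 'a \<Rightarrow> bool"
  assumes finite_V: "finite V"
    and sym: "E a b \<Longrightarrow> E b a"
    and irrefl: "\<not> E a a"
    and edge_in_V: "E a b \<Longrightarrow> a \<in> V" "E a b \<Longrightarrow> b \<in> V"
begin

lemma gdist_edge_le: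
  assumes "E x y"
  shows "gdist V E a y \<le> gdist V E a x + 1"
proof (cases "gdist V E a x")
  case (enat n)
  then obtain xs where xs: "walk E V xs" "hd xs = a" "last xs = x" "length xs = Suc n"
    by (rule gdist_attained)
  have "walk E V (xs @ [y])"
    using xs assms edge_in_V(2) by (auto simp: walk_iff_successively successively_append_iff)
  then have "gdist V E a y \<le> enat (length (xs @ [y]) - 1)"
    by (rule gdist_le_walk) (use xs in \<open>auto simp: walk_def\<close>)
  then show ?thesis
    using xs enat by (simp add: one_enat_def)
qed simp

lemma gdist_edge_cases:
  assumes "E x y" "gdist V E a x = enat r"
  obtains n where "gdist V E a y = enat n" "n \<le> Suc r" "r \<le> Suc n"
proof -
  have "gdist V E a y \<le> enat (Suc r)" "enat r \<le> gdist V E a y + 1"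
    using gdist_edge_le[OF assms(1), of a] gdist_edge_le[OF sym[OF assms(1)], of a] assms(2)
    by (simp_all add: one_enat_def)
  then obtain n where "gdist V E a y = enat n"
    by (cases "gdist V E a y") auto
  with \<open>gdist V E a y \<le> enat (Suc r)\<close> \<open>enat r \<le> gdist V E a y + 1\<close> show ?thesis
    using that by (simp add: one_enat_def)
qed

lemma gdist_predecessor:
  assumes "gdist V E a b = enat (Suc n)"
  obtains p where "E p b" "gdist V E a p = enat n"
proof -
  obtain xs where xs: "walk E V xs" "hd xs = a" "last xs = b" "length xs = Suc (Suc n)"
    using assms by (rule gdist_attained)
  define ys where "ys = butlast xs"
  define p where "p = last ys"
  have "ys \<noteq> []"
    using xs(4) by (cases xs) (auto simp: ys_def)
  moreover have xs_ys: "xs = ys @ [b]"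
    using xs(1,3) append_butlast_last_id[of xs] by (simp add: walk_def ys_def)
  ultimately have "walk E V ys" "E p b" "hd ys = a"
    using xs(1,2) unfolding p_def walk_iff_successively
    by (auto simp: successively_append_iff)
  then have "gdist V E a p \<le> enat n"
    using gdist_le_walk[of E V ys a p] xs(4) xs_ys by (simp add: p_def)
  moreover have "enat (Suc n) \<le> gdist V E a p + 1"
    using gdist_edge_le[OF \<open>E p b\<close>, of a] assms by simp
  ultimately have "gdist V E a p = enat n"
    by (cases "gdist V E a p") (auto simp: one_enat_def)
  with \<open>E p b\<close> show ?thesis
    by (rule that)
qed

lemma adj_outside: "i \<notin> V \<or> j \<notin> V \<Longrightarrow> adj E i j = 0"
  using edge_in_V by (auto simp: adj_def)

lemma normadj_outside: "i \<notin> V \<or> j \<notin> V \<Longrightarrow> normadj V E i j = 0"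
  using adj_outside by (simp add: normadj_def)

lemma degm_outside: "i \<notin> V \<or> j \<notin> V \<Longrightarrow> degm V E i j = 0"
proof -
  have "deg V E i = 0" if "i \<notin> V" for i
  proof -
    have "{x \<in> V. E i x} = {}"
      using edge_in_V that by blast
    then show ?thesis
      unfolding deg_def by (simp only: card.empty)
  qed
  then show "i \<notin> V \<or> j \<notin> V \<Longrightarrow> degm V E i j = 0"
    by (auto simp: degm_def)
qed

lemma nbm_left_recurrence:
  "nbm V E (n + 3) = mmul V (adj E) (nbm V E (n + 2)) - mmul V (degm V E - idm) (nbm V E (n + 1))"
  by (simp add: eval_nat_numeral fun_diff_def)

(* The definition multiplies by A on the left; in this form row v of B^(t) is determined by
   rows v of earlier matrices, which is what the computation at the root needs. *)
lemma nbm_right_recurrence: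
  "nbm V E (n + 3) = mmul V (nbm V E (n + 2)) (adj E) - mmul V (nbm V E (n + 1)) (degm V E - idm)"
proof (rule right_recurrence_from_left[OF finite_V nbm_left_recurrence])
  let ?A = "adj E" and ?D = "degm V E" and ?Q = "degm V E - idm"
  have B1: "nbm V E 1 = ?A" and B2: "nbm V E 2 = mmul V ?A ?A - ?D"
    by (simp_all add: eval_nat_numeral fun_eq_iff)
  have unit: "mmul V ?A idm = ?A" "mmul V idm ?A = ?A" "mmul V ?D idm = ?D" "mmul V idm ?D = ?D"
    using adj_outside degm_outside by (simp_all add: mmul_idm_left mmul_idm_right finite_V)
  have unit_AA: "mmul V idm (mmul V ?A ?A) = mmul V ?A ?A"
    by (simp add: mmul_assoc[OF finite_V, symmetric] unit)
  note distrib = mmul_diff_left mmul_diff_right mmul_assoc[OF finite_V]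
  have B3_left: "nbm V E 3 = mmul V ?A (nbm V E 2) - mmul V ?Q ?A"
    using nbm_left_recurrence[of 0] unfolding add_0 B1 .
  show B3: "nbm V E 3 = mmul V (nbm V E 2) ?A - mmul V (nbm V E 1) ?Q"
    unfolding B3_left B1 B2 by (simp add: distrib unit fun_eq_iff)
  have "nbm V E 4 = mmul V ?A (nbm V E 3) - mmul V ?Q (nbm V E 2)"
    using nbm_left_recurrence[of 1] by (simp add: numeral_eq_Suc del: nbm.simps minus_apply)
  also have "\<dots> = mmul V ?A (mmul V (nbm V E 2) ?A - mmul V ?A ?Q) - mmul V ?Q (nbm V E 2)"
    using B3 B1 by (simp del: nbm.simps minus_apply)
  also have "\<dots> = mmul V (mmul V ?A (nbm V E 2) - mmul V ?Q ?A) ?A - mmul V (nbm V E 2) ?Q"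
    \<comment> \<open>the diagonal matrices D and D - I commute\<close>
    unfolding B2 by (simp add: distrib unit unit_AA fun_eq_iff)
  also have "\<dots> = mmul V (nbm V E 3) ?A - mmul V (nbm V E 2) ?Q"
    using B3_left by (simp del: nbm.simps minus_apply)
  finally show "nbm V E 4 = mmul V (nbm V E 3) ?A - mmul V (nbm V E 2) ?Q" .
qed

lemma edge_if_normadj_nonzero: "normadj V E l u \<noteq> 0 \<Longrightarrow> E l u"
  by (auto simp: normadj_def adj_def split: if_splits)

lemma mpow_normadj_Suc:
  "mpow V (normadj V E) (Suc t) a u = (\<Sum>l\<in>V. mpow V (normadj V E) t a l * normadj V E l u)"
  using mpow_Suc_right[OF finite_V normadj_outside] by (simp add: mmul_def)

lemma gdist_le_if_mpow_normadj_nonzero: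
  assumes "a \<in> V" "mpow V (normadj V E) t a u \<noteq> 0"
  shows "gdist V E a u \<le> enat t"
  using assms(2)
proof (induction t arbitrary: u)
  case 0
  then show ?case
    using gdist_self[OF assms(1)] by (simp add: idm_def split: if_splits)
next
  case (Suc t)
  from Suc.prems obtain l where "l \<in> V" "mpow V (normadj V E) t a l * normadj V E l u \<noteq> 0"
    unfolding mpow_normadj_Suc by (rule sum.not_neutral_contains_not_neutral)
  then have "gdist V E a l \<le> enat t" "E l u"
    by (auto intro: Suc.IH edge_if_normadj_nonzero)
  have "gdist V E a u \<le> gdist V E a l + 1"
    using \<open>E l u\<close> by (rule gdist_edge_le)
  also have "\<dots> \<le> enat t + 1"
    using \<open>gdist V E a l \<le> enat t\<close> by (rule add_right_mono)
  finally show ?case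
    by (simp add: one_enat_def)
qed

end

locale tree_ball = simple_graph +
  fixes v :: 'a and k :: nat
  assumes root_in_V: "v \<in> V"
    and tree: "is_tree E (ball V E v k)"
begin

abbreviation level :: "'a \<Rightarrow> enat" where
  "level u \<equiv> gdist V E v u"

lemma level_0_iff: "level u = 0 \<longleftrightarrow> u = v"
  using gdist_eq_0_imp_eq[of V E v u] gdist_self[OF root_in_V] by auto

lemma in_ball: "level u = enat r \<Longrightarrow> r \<le> k \<Longrightarrow> u \<in> ball V E v k"
  using gdist_finite_imp_in_V by (auto simp: ball_def)

definition parent :: "'a \<Rightarrow> 'a" where
  "parent u = (SOME p. E p u \<and> eSuc (level p) = level u)"

lemma parent:
  assumes "level u = enat (Suc n)"
  shows "E (parent u) u" "level (parent u) = enat n"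
proof -
  obtain p where "E p u" "level p = enat n"
    using assms by (rule gdist_predecessor)
  with assms have "E p u \<and> eSuc (level p) = level u"
    by (simp add: eSuc_enat)
  then have "E (parent u) u \<and> eSuc (level (parent u)) = level u"
    unfolding parent_def by (rule someI)
  then show "E (parent u) u" "level (parent u) = enat n"
    using assms by (auto simp: eSuc_enat[symmetric])
qed

definition ancestor :: "'a \<Rightarrow> nat \<Rightarrow> 'a" where
  "ancestor u i = (parent ^^ i) u"

lemma level_ancestor:
  assumes "level u = enat r" "i \<le> r"
  shows "level (ancestor u i) = enat (r - i)"
  using assms(2)
proof (induction i)
  case (Suc i)
  then have "level (ancestor u i) = enat (Suc (r - Suc i))"
    by (simp add: Suc_diff_Suc)
  then show ?case
    by (simp add: ancestor_def parent(2))
qed (simp add: ancestor_def assms(1))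

lemma ancestor_edge:
  assumes "level u = enat r" "i < r"
  shows "E (ancestor u i) (ancestor u (Suc i))"
proof -
  have "level (ancestor u i) = enat (Suc (r - Suc i))"
    using level_ancestor[OF assms(1), of i] assms(2) by (simp add: Suc_diff_Suc)
  then show ?thesis
    using sym parent(1) by (simp add: ancestor_def)
qed

lemma ancestor_root: "level u = enat r \<Longrightarrow> ancestor u r = v"
  using level_ancestor[of u r r] level_0_iff by (simp add: zero_enat_def)

lemma ancestor_in_ball: "level u = enat r \<Longrightarrow> r \<le> k \<Longrightarrow> i \<le> r \<Longrightarrow> ancestor u i \<in> ball V E v k"
  using level_ancestor in_ball by (meson diff_le_self order_trans)

lemma inj_on_ancestor:
  assumes "level u = enat r"
  shows "inj_on (ancestor u) {..r}"
proof (rule inj_onI)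
  fix i j
  assume "i \<in> {..r}" "j \<in> {..r}" "ancestor u i = ancestor u j"
  then show "i = j"
    using level_ancestor[OF assms, of i] level_ancestor[OF assms, of j] by auto
qed

lemma first_common_ancestor:
  assumes x: "level x = enat r" and y: "level y = enat r" and "x \<noteq> y"
  obtains m where "0 < m" "m \<le> r" "ancestor x m = ancestor y m"
    "\<And>i. i < m \<Longrightarrow> ancestor x i \<noteq> ancestor y i"
proof
  define m where "m = (LEAST i. ancestor x i = ancestor y i)"
  have "ancestor x r = ancestor y r"
    using ancestor_root x y by simp
  then show "m \<le> r" "ancestor x m = ancestor y m"
    unfolding m_def by (auto intro: Least_le LeastI)
  show "ancestor x i \<noteq> ancestor y i" if "i < m" for i
    using not_less_Least that unfolding m_def by blast
  then show "0 < m"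
    using \<open>ancestor x m = ancestor y m\<close> \<open>x \<noteq> y\<close> by (cases m) (auto simp: ancestor_def)
qed

lemma no_walk_through_deeper_levels:
  assumes x: "level x = enat r" and y: "level y = enat r" and "r \<le> k" "x \<noteq> y"
    and ms: "set ms \<subseteq> ball V E v k" "distinct ms" "successively E (x # ms @ [y])"
    and deeper: "\<forall>z\<in>set ms. enat r < level z"
  shows False
proof -
  obtain m where m: "0 < m" "m \<le> r" "ancestor x m = ancestor y m"
    and diverge: "\<And>i. i < m \<Longrightarrow> ancestor x i \<noteq> ancestor y i"
    using first_common_ancestor[OF x y \<open>x \<noteq> y\<close>] by metis
  \<comment> \<open>the cycle runs from the first common ancestor down to x, through ms to y, and back up\<close>
  define L where "L = rev (map (ancestor x) [0..<Suc m])"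
  define U where "U = map (ancestor y) [0..<m]"
  define cs where "cs = L @ ms @ U"
  have ends: "hd L = ancestor y m" "last L = x" "hd U = y" "last U = ancestor y (m - 1)"
    "L \<noteq> []" "U \<noteq> []"
    using m(1,3) by (simp_all add: L_def U_def hd_rev last_rev hd_map last_map del: upt_Suc)
      (simp add: ancestor_def)+
  have set_LU: "set L = ancestor x ` {..m}" "set U = ancestor y ` {..<m}"
    by (simp_all add: L_def U_def atLeast0LessThan lessThan_Suc_atMost del: upt_Suc)
  have "successively (\<lambda>a b. E b a) (map (ancestor x) [0..<Suc m])"
    by (rule successively_map_upt) (use ancestor_edge[OF x] m(2) in \<open>auto intro: sym\<close>)
  then have "successively E L"
    by (simp add: L_def del: upt_Suc)
  moreover have "successively E U"
    unfolding U_def by (rule successively_map_upt) (use ancestor_edge[OF y] m(2) in auto)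
  ultimately have "successively E cs"
    using ms(3) ends by (auto simp: cs_def successively_append_iff successively_Cons hd_append)
  moreover have "set L \<union> set U \<subseteq> ball V E v k"
    unfolding set_LU using m(2)
    by (auto intro!: ancestor_in_ball[OF x \<open>r \<le> k\<close>] ancestor_in_ball[OF y \<open>r \<le> k\<close>])
  then have "set cs \<subseteq> ball V E v k"
    using ms(1) by (auto simp: cs_def)
  moreover have "distinct cs"
  proof -
    have "inj_on (ancestor x) {..m}" "inj_on (ancestor y) {..<m}"
      using m(2)
      by (auto intro: inj_on_subset[OF inj_on_ancestor[OF x]] inj_on_subset[OF inj_on_ancestor[OF y]])
    then have "distinct L" "distinct U"
      by (simp_all add: L_def U_def distinct_map atLeast0LessThan lessThan_Suc_atMost del: upt_Suc)
    moreover have "ancestor x i \<noteq> ancestor y j" if "i \<le> m" "j < m" for i j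
    proof
      assume eq: "ancestor x i = ancestor y j"
      then have "i = j"
        using level_ancestor[OF x, of i] level_ancestor[OF y, of j] that m(2) by auto
      then show False
        using diverge eq that(2) by simp
    qed
    then have "set L \<inter> set U = {}"
      unfolding set_LU by auto
    moreover have "level z \<le> enat r" if "z \<in> set L \<union> set U" for z
      using that m(2) unfolding set_LU by (auto simp: level_ancestor[OF x] level_ancestor[OF y])
    then have "set ms \<inter> (set L \<union> set U) = {}"
      using deeper leD by blast
    ultimately show ?thesis
      using ms(2) by (auto simp: cs_def)
  qed
  moreover have "3 \<le> length cs"
    using m(1) by (simp add: cs_def L_def U_def)
  moreover have "E (last cs) (hd cs)"
    using ancestor_edge[OF y, of "m - 1"] m ends by (simp add: cs_def)
  moreover have "cs \<noteq> []"
    using ends by (simp add: cs_def)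
  ultimately show False
    using tree unfolding is_tree_def walk_iff_successively by blast
qed

lemma no_edge_within_level:
  assumes "level x = enat r" "level y = enat r" "r \<le> k"
  shows "\<not> E x y"
proof
  assume "E x y"
  then have "x \<noteq> y"
    using irrefl by auto
  show False
    by (rule no_walk_through_deeper_levels[OF assms \<open>x \<noteq> y\<close>, of "[]"]) (use \<open>E x y\<close> in auto)
qed

lemma unique_parent:
  assumes u: "level u = enat (Suc r)" "Suc r \<le> k" and p: "E p u" "level p = enat r"
  shows "p = parent u"
proof (rule ccontr)
  assume "p \<noteq> parent u"
  show False
  proof (rule no_walk_through_deeper_levels[OF p(2) parent(2)[OF u(1)] _ \<open>p \<noteq> parent u\<close>, of "[u]"])
    show "set [u] \<subseteq> ball V E v k"
      using in_ball[OF u] by simp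
  qed (use u p parent(1)[OF u(1)] in \<open>auto intro: sym\<close>)
qed

definition sphere :: "nat \<Rightarrow> 'a set" where
  "sphere t = {u \<in> V. level u = enat t}"

lemma sphere_0: "sphere 0 = {v}"
  using level_0_iff root_in_V by (auto simp: sphere_def zero_enat_def[symmetric])

lemma finite_sphere: "finite (sphere t)"
  using finite_V by (simp add: sphere_def)

end

locale regular_tree_ball = tree_ball +
  fixes d :: nat
  assumes regular: "u \<in> ball V E v k \<Longrightarrow> deg V E u = d"
    and d_pos: "0 < d"
begin

definition branching :: "nat \<Rightarrow> nat" where
  "branching r = (if r = 0 then d else d - 1)"

lemma card_children:
  assumes u: "level u = enat r" and "r \<le> k"
  shows "card {x \<in> sphere (Suc r). E u x} = branching r"
proof -
  let ?N = "{x \<in> V. E u x}" and ?C = "{x \<in> sphere (Suc r). E u x}"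
  have "card ?N = d"
    using regular[OF in_ball[OF u \<open>r \<le> k\<close>]] by (simp add: deg_def)
  have "x \<in> ?C \<or> (0 < r \<and> x = parent u)" if "x \<in> ?N" for x
  proof -
    from that have "E u x" "x \<in> V"
      by auto
    obtain n where n: "level x = enat n" "n \<le> Suc r" "r \<le> Suc n"
      using \<open>E u x\<close> u by (rule gdist_edge_cases)
    have "n \<noteq> r"
      using no_edge_within_level[OF u _ \<open>r \<le> k\<close>] \<open>E u x\<close> n(1) by auto
    moreover have "x = parent u" if "Suc n = r"
      using unique_parent[of u n x] u that \<open>r \<le> k\<close> sym[OF \<open>E u x\<close>] n(1) by auto
    ultimately show ?thesis
      using n \<open>E u x\<close> \<open>x \<in> V\<close> by (auto simp: sphere_def)
  qed
  moreover have "?C \<subseteq> ?N"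
    by (auto simp: sphere_def)
  moreover have "E (parent u) u" "parent u \<notin> ?C" if "0 < r"
    using parent[of u "r - 1"] u that by (auto simp: sphere_def)
  ultimately have "?N = (if r = 0 then ?C else insert (parent u) ?C)"
    using edge_in_V sym by auto
  then show ?thesis
    using \<open>card ?N = d\<close> finite_sphere \<open>\<And>_. 0 < r \<Longrightarrow> parent u \<notin> ?C\<close>
    by (auto simp: branching_def split: if_splits)
qed

lemma card_neighbours_in_sphere:
  assumes "s + 2 \<le> k"
  shows "card {l \<in> sphere (Suc s). E l u} =
    (if level u = enat (s + 2) then 1 else if level u = enat s then branching s else 0)"
proof -
  let ?C = "{l \<in> sphere (Suc s). E l u}"
  consider (below) "level u = enat (s + 2)" | (same) "level u = enat (Suc s)"
    | (above) "level u = enat s" | (far) "level u \<notin> {enat s, enat (Suc s), enat (s + 2)}"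
    by blast
  then show ?thesis
  proof cases
    case below
    have "E (parent u) u" "level (parent u) = enat (Suc s)"
      using parent[of u "Suc s"] below by simp_all
    moreover have "l = parent u" if "E l u" "level l = enat (Suc s)" for l
      using unique_parent[of u "Suc s" l] below \<open>s + 2 \<le> k\<close> that by simp
    ultimately have "?C = {parent u}"
      using edge_in_V(1)[OF \<open>E (parent u) u\<close>] unfolding sphere_def by blast
    then show ?thesis
      using below by simp
  next
    case same
    have "?C = {}"
      using no_edge_within_level[of _ "Suc s" u] same \<open>s + 2 \<le> k\<close> by (auto simp: sphere_def)
    then have "card ?C = 0"
      by (simp only: card.empty)
    then show ?thesis
      using same by simp
  next
    case above
    have "?C = {x \<in> sphere (Suc s). E u x}"
      using sym by blast
    then show ?thesis
      using card_children[OF above] above \<open>s + 2 \<le> k\<close> by simp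
  next
    case far
    have "?C = {}"
    proof (rule ccontr)
      assume "?C \<noteq> {}"
      then obtain l where "E l u" "level l = enat (Suc s)"
        by (auto simp: sphere_def)
      then obtain n where "level u = enat n" "n \<le> Suc (Suc s)" "Suc s \<le> Suc n"
        by (rule gdist_edge_cases)
      with far show False
        by (auto simp: le_Suc_eq)
    qed
    then have "card ?C = 0"
      by (simp only: card.empty)
    then show ?thesis
      using far by auto
  qed
qed

lemma card_sphere_Suc:
  assumes "Suc t \<le> k"
  shows "card (sphere (Suc t)) = card (sphere t) * branching t"
proof -
  let ?children = "\<lambda>u. {x \<in> sphere (Suc t). E u x}"
  have "sphere (Suc t) = (\<Union>u\<in>sphere t. ?children u)"
    using parent[of _ t] by (auto simp: sphere_def intro: edge_in_V)
  moreover have "?children a \<inter> ?children b = {}" if "a \<in> sphere t" "b \<in> sphere t" "a \<noteq> b" for a b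
    using unique_parent[of _ t a] unique_parent[of _ t b] that assms by (auto simp: sphere_def)
  ultimately have "card (sphere (Suc t)) = (\<Sum>u\<in>sphere t. card (?children u))"
    using card_UN_disjoint[of "sphere t" ?children] finite_sphere by simp
  also have "\<dots> = (\<Sum>u\<in>sphere t. branching t)"
    using card_children assms by (intro sum.cong) (auto simp: sphere_def)
  finally show ?thesis
    by simp
qed

lemma card_sphere:
  assumes "0 < t" "t \<le> k"
  shows "card (sphere t) = d * (d - 1) ^ (t - 1)"
  using assms
proof (induction t)
  case (Suc t)
  then show ?case
    using card_sphere_Suc[of t] sphere_0 by (cases t) (simp_all add: branching_def)
qed simp

lemma edge_from_root_iff: "E v u \<longleftrightarrow> level u = enat 1"
proof
  assume "E v u"
  moreover have "level v = enat 0"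
    using gdist_self[OF root_in_V] by (simp add: zero_enat_def)
  ultimately obtain n where n: "level u = enat n" "n \<le> 1"
    by (rule gdist_edge_cases) auto
  moreover have "u \<noteq> v"
    using \<open>E v u\<close> irrefl by auto
  ultimately show "level u = enat 1"
    using level_0_iff[of u] by (cases n) (auto simp: zero_enat_def)
next
  assume "level u = enat 1"
  then show "E v u"
    using parent[of u 0] level_0_iff by (simp add: zero_enat_def)
qed

(* B^(2) subtracts D rather than D - I, matching the d children of the root against the d - 1
   children of any other vertex. *)
lemma nbm_root_entry_Suc_Suc:
  assumes "s + 2 \<le> k" "u \<in> V"
    and row: "\<And>l. l \<in> V \<Longrightarrow> nbm V E s v l = of_bool (level l = enat s)"
  shows "nbm V E (s + 2) v u = (\<Sum>l\<in>V. nbm V E (s + 1) v l * adj E l u)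
                              - of_bool (level u = enat s) * real (branching s)"
proof (cases s)
  case 0
  have "deg V E v = d"
    using regular in_ball[of v 0] gdist_self[OF root_in_V] by (simp add: zero_enat_def)
  then show ?thesis
    using 0 level_0_iff[of u] by (auto simp: mmul_def degm_def branching_def zero_enat_def)
next
  case (Suc s')
  have "(degm V E - idm) l u = (if l = u then real (deg V E u) - 1 else 0)" for l
    by (simp add: degm_def idm_def)
  then have "(\<Sum>l\<in>V. nbm V E s v l * (degm V E - idm) l u) = nbm V E s v u * (real (deg V E u) - 1)"
    using finite_V \<open>u \<in> V\<close> by (simp add: if_distrib[of "\<lambda>x. _ * x"] cong: if_cong)
  also have "\<dots> = of_bool (level u = enat s) * real (branching s)"
    using row[OF \<open>u \<in> V\<close>] regular[OF in_ball, of u s] \<open>s + 2 \<le> k\<close> d_pos Suc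
    by (auto simp: branching_def of_nat_diff)
  finally show ?thesis
    using nbm_right_recurrence[of s'] Suc by (simp add: mmul_def eval_nat_numeral)
qed

lemma nbm_root_row:
  assumes "t \<le> k" "u \<in> V"
  shows "nbm V E t v u = of_bool (level u = enat t)"
  using assms
proof (induction t arbitrary: u rule: less_induct)
  case (less t)
  consider "t = 0" | "t = 1" | s where "t = s + 2"
    by (metis add_2_eq_Suc' One_nat_def not0_implies_Suc)
  then show ?case
  proof cases
    case 1
    then show ?thesis
      using level_0_iff[of u] by (auto simp: idm_def zero_enat_def)
  next
    case 2
    then show ?thesis
      using edge_from_root_iff by (simp add: adj_def)
  next
    case 3
    have row: "nbm V E r v l = of_bool (level l = enat r)" if "r < t" "l \<in> V" for r l
      using less that by simp
    have "(\<Sum>l\<in>V. nbm V E (s + 1) v l * adj E l u) = card {l \<in> sphere (Suc s). E l u}"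
      using row 3 finite_V by (simp add: adj_def sphere_def sum.inter_filter[symmetric] conj_commute)
    then show ?thesis
      using nbm_root_entry_Suc_Suc[of s u] card_neighbours_in_sphere[of s u] row 3 less.prems
      by auto
  qed
qed

lemma normadj_row_sum:
  assumes "level l = enat n" "n < k"
  shows "(\<Sum>u\<in>V. normadj V E l u) = 1"
proof -
  have "normadj V E l u = of_bool (E l u) / real d" for u
  proof (cases "E l u")
    case True
    then obtain n' where "level u = enat n'" "n' \<le> Suc n"
      using assms(1) by (rule gdist_edge_cases)
    then have "deg V E l = d" "deg V E u = d"
      using regular[OF in_ball[OF assms(1)]] regular[OF in_ball[of u n']] assms(2) by simp_all
    then show ?thesis
      using True d_pos by (simp add: normadj_def adj_def)
  qed (simp add: normadj_def adj_def)
  moreover have "card {u \<in> V. E l u} = d"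
    using regular[OF in_ball] assms by (simp add: deg_def)
  ultimately show ?thesis
    using finite_V d_pos by (simp add: sum_divide_distrib[symmetric] Int_def conj_commute)
qed

lemma mpow_normadj_root_row_sum:
  "t \<le> k \<Longrightarrow> (\<Sum>u\<in>V. mpow V (normadj V E) t v u) = 1"
proof (induction t)
  case 0
  then show ?case
    using finite_V root_in_V by (simp add: idm_def)
next
  case (Suc t)
  let ?P = "mpow V (normadj V E) t v"
  have "(\<Sum>u\<in>V. mpow V (normadj V E) (Suc t) v u) = (\<Sum>l\<in>V. ?P l * (\<Sum>u\<in>V. normadj V E l u))"
    unfolding mpow_normadj_Suc sum_distrib_left by (rule sum.swap)
  also have "\<dots> = (\<Sum>l\<in>V. ?P l)"
  proof (rule sum.cong)
    fix l
    assume "l \<in> V"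
    show "?P l * (\<Sum>u\<in>V. normadj V E l u) = ?P l"
    proof (cases "?P l = 0")
      case False
      then have "level l \<le> enat t"
        by (rule gdist_le_if_mpow_normadj_nonzero[OF root_in_V])
      then obtain n where "level l = enat n" "n \<le> t"
        by (cases "level l") auto
      then show ?thesis
        using normadj_row_sum Suc.prems by simp
    qed simp
  qed simp
  finally show ?case
    using Suc by simp
qed

lemma mpow_normadj_root_sphere:
  "t \<le> k \<Longrightarrow> level u = enat t \<Longrightarrow> mpow V (normadj V E) t v u = 1 / real d ^ t"
proof (induction t arbitrary: u)
  case 0
  then show ?case
    using level_0_iff by (simp add: idm_def zero_enat_def)
next
  case (Suc t)
  let ?P = "mpow V (normadj V E) t v"
  have parent_u: "E (parent u) u" "level (parent u) = enat t"
    using parent[OF Suc.prems(2)] by simp_all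
  have "?P l * normadj V E l u = 0" if "l \<noteq> parent u" for l
  proof (rule ccontr)
    assume "?P l * normadj V E l u \<noteq> 0"
    then have "level l \<le> enat t" "E l u"
      using gdist_le_if_mpow_normadj_nonzero[OF root_in_V] edge_if_normadj_nonzero by simp_all
    moreover obtain n where "level l = enat n" "n \<le> Suc (Suc t)" "Suc t \<le> Suc n"
      using sym[OF \<open>E l u\<close>] Suc.prems(2) by (rule gdist_edge_cases)
    ultimately have "level l = enat t"
      by simp
    then show False
      using unique_parent[OF Suc.prems(2,1) \<open>E l u\<close>] that by simp
  qed
  then have "mpow V (normadj V E) (Suc t) v u
      = (\<Sum>l\<in>V. if l = parent u then ?P l * normadj V E l u else 0)"
    unfolding mpow_normadj_Suc by (intro sum.cong) auto
  also have "\<dots> = ?P (parent u) * normadj V E (parent u) u"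
    using finite_V edge_in_V(1)[OF parent_u(1)] by simp
  also have "\<dots> = 1 / real d ^ t * (1 / real d)"
  proof -
    have "?P (parent u) = 1 / real d ^ t"
      using Suc parent_u(2) by simp
    moreover have "normadj V E (parent u) u = 1 / real d"
      using parent_u regular[OF in_ball[OF parent_u(2)]] regular[OF in_ball[OF Suc.prems(2)]]
        d_pos Suc.prems(1)
      by (simp add: normadj_def adj_def)
    ultimately show ?thesis
      by simp
  qed
  finally show ?case
    by simp
qed

end

theorem lemmaG2:
  fixes V :: "'a set" and E :: "'a \<Rightarrow> 'a \<Rightarrow> bool" and k d :: nat
    and v w :: 'a and X :: "'a \<Rightarrow> real^'f"
  assumes "finite V"
    and "\<forall>a b. E a b \<longrightarrow> E b a"
    and "\<forall>a. \<not> E a a"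
    and "\<forall>a b. E a b \<longrightarrow> a \<in> V \<and> b \<in> V"
    and "k \<ge> 1" and "d \<ge> 2"
    and "v \<in> V" and "w \<in> V"
    and "gdist V E v w = enat k"
    and "is_tree E (ball V E v k)"
    and "\<forall>u\<in>ball V E v k. deg V E u = d"
  shows "influence V (mpow V (normadj V E) k) X v w / influence V (nbm V E k) X v w
         = ((real d - 1) / real d) ^ (k - 1)"
proof -
  interpret regular_tree_ball V E v k d
    using assms by unfold_locales auto
  have adjacency: "influence V (mpow V (normadj V E) k) X v w = 1 / real d ^ k"
    unfolding influence_linear_extraction[OF assms(1,8)]
    using mpow_normadj_root_sphere[OF _ assms(9)] mpow_normadj_root_row_sum[of k] by simp
  have "(\<Sum>u\<in>V. nbm V E k v u) = real (card (sphere k))"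
    using nbm_root_row[of k] finite_V by (simp add: sphere_def Int_def)
  also have "\<dots> = real d * (real d - 1) ^ (k - 1)"
    using card_sphere[of k] assms(5,6) by (simp add: of_nat_diff)
  finally have non_backtracking: "influence V (nbm V E k) X v w = 1 / (real d * (real d - 1) ^ (k - 1))"
    unfolding influence_linear_extraction[OF assms(1,8)] using nbm_root_row[OF _ assms(8)] assms(9) by simp
  obtain k' where "k = Suc k'"
    using assms(5) by (cases k) auto
  then show ?thesis
    unfolding adjacency non_backtracking using assms(6) by (simp add: power_divide)
qed

end
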